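(* Let $\Lambda=(V,\pi,v,\le)$ be a bi-colored weighted ordered vertex with $r(\Lambda)=2$, and identify $V=\{1,\dots,l\}$ via $\le$. If $\pi(1)=\pi(2)=\circ$, then $s(\Lambda)=0$.
   Context: A bi-colored weighted ordered vertex is $\Lambda=(V,\pi,v,\le)$ with $V$ a finite set, $\pi\colon V\to\{\bullet,\circ\}$, $v\colon V\to\mathbb{Z}_{\ge1}$, $\le$ a total order on $V$. Put $V_\bullet=\pi^{-1}(\bullet)$, $V_\circ=\pi^{-1}(\circ)$, $r(\Lambda)=\sum_{i\in V_\bullet}v(i)$, $n(\Lambda)=\sum_{i\in V_\circ}v(i)$; $v_i=(v(i),0)$ if $i\in V_\bullet$, $v_i=(0,v(i))$ if $i\in V_\circ$. For $(r,n)\in\mathbb{Z}_{\ge0}^2\setminus\{0\}$ let $\mu(r,n)=n/r\in\mathbb{Q}\cup\{\infty\}$ ($\infty$ if $r=0$, larger than every rational). For vectors $w_1,\dots,w_l$ define $s_l(w_1,\dots,w_l)=(-1)^k$ if for each $i=1,\dots,l-1$ either (a) $\mu(w_i)>\mu(w_{i+1})$ and $\mu(w_1+\dots+w_i)\ge\mu(w_{i+1}+\dots+w_l)$, or (b) $\mu(w_i)\le\mu(w_{i+1})$ and $\mu(w_1+\dots+w_i)<\mu(w_{i+1}+\dots+w_l)$, where $k$ is the number of $i$ satisfying (b); otherwise $s_l=0$. Set $s(\Lambda)=s_l(v_1,\dots,v_l)$, $l=|V|$. *)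

theory Defs
  imports "HOL-Library.Extended_Real"
begin

datatype color = Black | White

text \<open>A bi-colored weighted ordered vertex with V identified with {1..l} via the order
  is represented as the list of (colour, weight) pairs in increasing order.\<close>
type_synonym bwov = "(color \<times> nat) list"

definition wf_bwov :: "bwov \<Rightarrow> bool" where
  "wf_bwov L \<longleftrightarrow> (\<forall>p\<in>set L. snd p \<ge> 1)"

definition r_of :: "bwov \<Rightarrow> nat" where
  "r_of L = sum_list (map snd (filter (\<lambda>p. fst p = Black) L))"

definition n_of :: "bwov \<Rightarrow> nat" where
  "n_of L = sum_list (map snd (filter (\<lambda>p. fst p = White) L))"

definition vec_of :: "color \<times> nat \<Rightarrow> nat \<times> nat" where
  "vec_of p = (if fst p = Black then (snd p, 0) else (0, snd p))"

definition mu :: "nat \<times> nat \<Rightarrow> ereal" where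
  "mu w = (if fst w = 0 then \<infinity> else ereal (real (snd w) / real (fst w)))"

definition vsum :: "(nat \<times> nat) list \<Rightarrow> nat \<times> nat" where
  "vsum ws = (sum_list (map fst ws), sum_list (map snd ws))"

text \<open>Conditions (a) and (b) at position i (0-based: between ws!i and ws!(i+1)).\<close>
definition cond_a :: "(nat \<times> nat) list \<Rightarrow> nat \<Rightarrow> bool" where
  "cond_a ws i \<longleftrightarrow> mu (ws!i) > mu (ws!(i+1)) \<and>
      mu (vsum (take (i+1) ws)) \<ge> mu (vsum (drop (i+1) ws))"

definition cond_b :: "(nat \<times> nat) list \<Rightarrow> nat \<Rightarrow> bool" where
  "cond_b ws i \<longleftrightarrow> mu (ws!i) \<le> mu (ws!(i+1)) \<and>
      mu (vsum (take (i+1) ws)) < mu (vsum (drop (i+1) ws))"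

definition s_l :: "(nat \<times> nat) list \<Rightarrow> int" where
  "s_l ws = (if \<forall>i. i + 1 < length ws \<longrightarrow> cond_a ws i \<or> cond_b ws i
             then (-1) ^ card {i. i + 1 < length ws \<and> cond_b ws i} else 0)"

definition s_of :: "bwov \<Rightarrow> int" where
  "s_of L = s_l (map vec_of L)"

end

theory Submission
  imports Defs
begin

text \<open>Two white vertices at the front both have slope \<open>\<infinity>\<close>, and so does the partial sum
  consisting of the first one alone. Hence neither (a) (which needs a strict drop of slope)
  nor (b) (which needs the partial sum to have slope below \<open>\<infinity>\<close>) holds at the first position,
  so the sign vanishes.\<close>

lemma vsum_singleton [simp]: "vsum [w] = w"
  by (simp add: vsum_def)

lemma mu_vec_of_White: "fst p = White \<Longrightarrow> mu (vec_of p) = \<infinity>"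
  by (simp add: vec_of_def mu_def)

lemma s_l_eq_0_if_not_cond:
  assumes "i + 1 < length ws" and "\<not> cond_a ws i" and "\<not> cond_b ws i"
  shows "s_l ws = 0"
  using assms by (auto simp add: s_l_def)

lemma s_l_eq_0_if_leading_slopes_infinite:
  assumes "length ws \<ge> 2" and "mu (ws!0) = \<infinity>" and "mu (ws!1) = \<infinity>"
  shows "s_l ws = 0"
proof (rule s_l_eq_0_if_not_cond)
  show "0 + 1 < length ws"
    using assms(1) by simp
  show "\<not> cond_a ws 0"
    using assms(2,3) by (simp add: cond_a_def)
  have "take 1 ws = [ws!0]"
    using assms(1) by (cases ws) auto
  then show "\<not> cond_b ws 0"
    using assms(2) by (simp add: cond_b_def)
qed

theorem lemma4p8:
  fixes L :: bwov
  assumes "wf_bwov L" and "r_of L = 2" and "length L \<ge> 2"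
    and "fst (L!0) = White" and "fst (L!1) = White"
  shows "s_of L = 0"
  unfolding s_of_def
proof (rule s_l_eq_0_if_leading_slopes_infinite)
  show "length (map vec_of L) \<ge> 2"
    using assms(3) by simp
  show "mu (map vec_of L ! 0) = \<infinity>"
    using assms(3,4) by (subst nth_map) (auto intro: mu_vec_of_White)
  show "mu (map vec_of L ! 1) = \<infinity>"
    using assms(3,5) by (subst nth_map) (auto intro: mu_vec_of_White)
qed

end
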